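(* Let $S$ be a set of $n\ge 3$ points in the plane in general position (no four points of $S$ cocircular, no three collinear). Let $\Pi(S)$ be the Voronoi poset of $S$, ordered by inclusion. Then $\Pi(S)$ is graded, i.e. it has a unique minimal element and a unique maximal element, and every maximal chain in $\Pi(S)$ has the same length.
   Context: For points $x,y$ in the plane let $h(x,y)=\{p\in\mathbb{R}^2 : d(x,p)\le d(y,p)\}$. For $A\subseteq S$ let $V(A)=\bigcap_{x\in A,\,y\in S\setminus A} h(x,y)$ (which equals $\mathbb{R}^2$ for $A=\emptyset$ and $A=S$). Label the points of $S$ by $[n]=\{1,\dots,n\}$. The Voronoi poset $\Pi(S)$ is the set of label sets $L(A)\subseteq[n]$ of those subsets $A\subseteq S$ (of any size $0\le |A|\le n$) for which $V(A)\neq\emptyset$, partially ordered by set inclusion; its minimal element is $\emptyset$ and its maximal element is $[n]$. *)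

theory Defs
  imports "HOL-Analysis.Analysis"
begin

type_synonym point = "real^2"

definition hplane :: "point \<Rightarrow> point \<Rightarrow> point set" where
  "hplane x y = {q. dist x q \<le> dist y q}"

definition vcell :: "point set \<Rightarrow> point set \<Rightarrow> point set" where
  "vcell S A = (\<Inter>x\<in>A. \<Inter>y\<in>S - A. hplane x y)"

definition voronoi_poset :: "nat \<Rightarrow> (nat \<Rightarrow> point) \<Rightarrow> nat set set" where
  "voronoi_poset n p = {L. L \<subseteq> {1..n} \<and> vcell (p ` {1..n}) (p ` L) \<noteq> {}}"

definition cocircular :: "point set \<Rightarrow> bool" where
  "cocircular A \<longleftrightarrow> (\<exists>c r. \<forall>x\<in>A. dist c x = r)"

definition general_position :: "point set \<Rightarrow> bool" where
  "general_position S \<longleftrightarrow>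
     (\<forall>T\<subseteq>S. card T = 3 \<longrightarrow> \<not> collinear T) \<and>
     (\<forall>T\<subseteq>S. card T = 4 \<longrightarrow> \<not> cocircular T)"

definition is_chain_in :: "'a set set \<Rightarrow> 'a set set \<Rightarrow> bool" where
  "is_chain_in P C \<longleftrightarrow> C \<subseteq> P \<and> (\<forall>A\<in>C. \<forall>B\<in>C. A \<subseteq> B \<or> B \<subseteq> A)"

definition is_maximal_chain_in :: "'a set set \<Rightarrow> 'a set set \<Rightarrow> bool" where
  "is_maximal_chain_in P C \<longleftrightarrow> is_chain_in P C \<and> (\<forall>D. is_chain_in P D \<and> C \<subseteq> D \<longrightarrow> D = C)"

text \<open>Graded (finite) poset under inclusion: least and greatest element, and all
  maximal chains have the same length (length = cardinality - 1).\<close>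
definition graded_poset :: "'a set set \<Rightarrow> bool" where
  "graded_poset P \<longleftrightarrow>
     (\<exists>m\<in>P. \<forall>x\<in>P. m \<subseteq> x) \<and> (\<exists>M\<in>P. \<forall>x\<in>P. x \<subseteq> M) \<and>
     (\<forall>C D. is_maximal_chain_in P C \<and> is_maximal_chain_in P D \<longrightarrow> card C = card D)"

end

(* If A is a proper subset of B and both V(A) and V(B) are nonempty, walk along the segment
   from a point of V(A) to a point of V(B). The points of A stay at least as close as those of
   S - B, since these half-plane conditions are convex. By connectedness of [0,1] there is a
   moment at which A is still at least as close as B - A while some point of B - A is as close
   as some point of A; there, adding the nearest point of B - A to A gives a nonempty cell.
   Hence A can always be enlarged inside B by a single point, which forces every maximal chain
   of the Voronoi poset to contain exactly one label set of each size 0, ..., n. *)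
theory Submission
  imports Defs
begin

lemma dist_le_dist_iff_inner:
  fixes a b q :: "'a::real_inner"
  shows "dist a q \<le> dist b q \<longleftrightarrow> inner (2 *\<^sub>R (b - a)) q \<le> inner b b - inner a a"
proof -
  have sq: "(dist x q)\<^sup>2 = inner x x - 2 * inner x q + inner q q" for x
    by (simp add: dist_norm power2_norm_eq_inner inner_diff_left inner_diff_right inner_commute)
  have "dist a q \<le> dist b q \<longleftrightarrow> (dist a q)\<^sup>2 \<le> (dist b q)\<^sup>2"
    by (simp add: power2_le_iff_abs_le)
  also have "\<dots> \<longleftrightarrow> inner (2 *\<^sub>R (b - a)) q \<le> inner b b - inner a a"
    unfolding sq by (simp add: inner_diff_left algebra_simps)
  finally show ?thesis .
qed

lemma hplane_eq_halfspace: "hplane x y = {q. inner (2 *\<^sub>R (y - x)) q \<le> inner y y - inner x x}"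
  unfolding hplane_def dist_le_dist_iff_inner ..

lemma closed_hplane: "closed (hplane x y)"
  unfolding hplane_eq_halfspace by (rule closed_halfspace_le)

lemma convex_hplane: "convex (hplane x y)"
  unfolding hplane_eq_halfspace by (rule convex_halfspace_le)

lemma closed_vcell: "closed (vcell S A)"
  unfolding vcell_def by (intro closed_INT ballI closed_hplane)

lemma vcell_empty [simp]: "vcell S {} = UNIV"
  and vcell_self [simp]: "vcell S S = UNIV"
  by (simp_all add: vcell_def)

lemma vcell_insert_nearest:
  assumes "A \<subseteq> B" "z \<in> B - A" and nearest: "\<forall>y\<in>B - A. dist z q \<le> dist y q"
    and outer: "\<forall>x\<in>A. \<forall>y\<in>S - B. q \<in> hplane x y"
    and inner: "q \<in> vcell B A"
    and crossed: "q \<in> (\<Union>x\<in>A. \<Union>y\<in>B - A. hplane y x) \<or> q \<in> vcell S B"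
  shows "q \<in> vcell S (insert z A)"
  unfolding vcell_def
proof (intro INT_I)
  fix x y assume x: "x \<in> insert z A" and "y \<in> S - insert z A"
  then have y: "y \<in> S" "y \<noteq> z" "y \<notin> A" by auto
  show "q \<in> hplane x y"
  proof (cases "y \<in> B")
    case True
    then show ?thesis
      using x y inner nearest unfolding vcell_def hplane_def by auto
  next
    case False
    have "dist z q \<le> dist y q"
      using crossed
    proof
      assume "q \<in> (\<Union>x\<in>A. \<Union>y\<in>B - A. hplane y x)"
      then obtain x' y' where "x' \<in> A" "y' \<in> B - A" "dist y' q \<le> dist x' q"
        unfolding hplane_def by blast
      moreover have "dist x' q \<le> dist y q"
        using outer \<open>x' \<in> A\<close> y False unfolding hplane_def by blast
      ultimately show ?thesis using nearest by (meson order_trans)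
    next
      assume "q \<in> vcell S B"
      then show ?thesis using assms(2) y False unfolding vcell_def hplane_def by blast
    qed
    then show ?thesis using x y False outer unfolding hplane_def by blast
  qed
qed

lemma vcell_interpolate:
  assumes "finite S" "A \<subset> B" "B \<subseteq> S" "vcell S A \<noteq> {}" "vcell S B \<noteq> {}"
  shows "\<exists>z\<in>B - A. vcell S (insert z A) \<noteq> {}"
proof -
  obtain qa qb where qa: "qa \<in> vcell S A" and qb: "qb \<in> vcell S B"
    using assms(4,5) by blast
  define q where "q t = (1 - t) *\<^sub>R qa + t *\<^sub>R qb" for t :: real
  define E1 where "E1 = q -` vcell B A"
  define E2 where "E2 = q -` (\<Union>x\<in>A. \<Union>y\<in>B - A. hplane y x)"
  have "finite B"
    using assms(1,3) by (rule finite_subset[rotated])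
  then have fin: "finite A" "finite (B - A)" "B - A \<noteq> {}"
    using assms(2) by (auto intro: finite_subset)
  have cont: "continuous (at t) q" for t
    unfolding q_def by (intro continuous_intros)
  have "closed E1"
    unfolding E1_def by (intro continuous_closed_vimage closed_vcell cont)
  have "closed E2"
    unfolding E2_def by (intro continuous_closed_vimage closed_UN closed_hplane cont fin ballI)
  have outer: "\<forall>x\<in>A. \<forall>y\<in>S - B. q t \<in> hplane x y" if "0 \<le> t" "t \<le> 1" for t
  proof -
    define W where "W = (\<Inter>x\<in>A. \<Inter>y\<in>S - B. hplane x y)"
    have "convex W"
      unfolding W_def by (intro convex_INT convex_hplane)
    moreover have "qa \<in> W"
      using qa assms(2) unfolding W_def vcell_def by blast
    moreover have "qb \<in> W"
      using qb assms(2) unfolding W_def vcell_def by (auto simp del: Diff_iff)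
    ultimately have "q t \<in> W"
      unfolding q_def using that by (intro convexD) auto
    then show ?thesis unfolding W_def by blast
  qed
  have found: "\<exists>z\<in>B - A. vcell S (insert z A) \<noteq> {}"
    if "t \<in> E1" "t \<in> E2 \<or> t = 1" "0 \<le> t" "t \<le> 1" for t
  proof -
    define z where "z = arg_min_on (\<lambda>y. dist y (q t)) (B - A)"
    have z: "z \<in> B - A" "\<forall>y\<in>B - A. dist z (q t) \<le> dist y (q t)"
      unfolding z_def using arg_min_if_finite(1) arg_min_least fin by metis+
    have "q 1 = qb" by (simp add: q_def)
    then have "q t \<in> vcell S (insert z A)"
      using that qb assms(2)
      by (intro vcell_insert_nearest[OF _ z outer]) (auto simp: E1_def E2_def less_imp_le)
    then show ?thesis using z(1) by blast
  qed
  show ?thesis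
  proof (cases "1 \<in> E1")
    case True
    then show ?thesis by (rule found) auto
  next
    case False
    have cover: "{0..1} \<subseteq> E1 \<union> E2"
      unfolding E1_def E2_def vcell_def hplane_def by (force simp: not_le intro: less_imp_le)
    have "q 0 = qa" by (simp add: q_def)
    then have "0 \<in> E1"
      using qa assms(2,3) unfolding E1_def vcell_def by auto
    moreover have "1 \<in> E2"
      using False cover by (meson Un_iff atLeastAtMost_iff order_refl zero_le_one subsetD)
    ultimately have "E1 \<inter> {0..1} \<noteq> {}" "E2 \<inter> {0..1} \<noteq> {}"
      by auto
    then obtain t where "t \<in> E1" "t \<in> E2" "t \<in> {0..1}"
      using connected_closedD[OF connected_Icc _ cover \<open>closed E1\<close> \<open>closed E2\<close>] by blast
    then show ?thesis by (intro found[of t]) auto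
  qed
qed

lemma chain_subset_if_card_le:
  assumes "is_chain_in P C" "X \<in> C" "Y \<in> C" "finite X" "card X \<le> card Y"
  shows "X \<subseteq> Y"
proof (rule ccontr)
  assume "\<not> X \<subseteq> Y"
  then have "Y \<subset> X" using assms(1-3) unfolding is_chain_in_def by blast
  then have "card Y < card X" using assms(4) by (rule psubset_card_mono[rotated])
  with assms(5) show False by simp
qed

lemma inj_on_card_chain:
  assumes "is_chain_in P C" "\<forall>X\<in>C. finite X"
  shows "inj_on card C"
proof (rule inj_onI)
  fix X Y assume "X \<in> C" "Y \<in> C" "card X = card Y"
  then show "X = Y"
    using chain_subset_if_card_le[OF assms(1)] assms(2) by (simp add: subset_antisym)
qed

lemma maximal_chain_insert:
  assumes "is_maximal_chain_in P C" "Y \<in> P" "\<forall>D\<in>C. D \<subseteq> Y \<or> Y \<subseteq> D"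
  shows "Y \<in> C"
proof -
  have "is_chain_in P (insert Y C)"
    using assms unfolding is_maximal_chain_in_def is_chain_in_def by blast
  then have "insert Y C = C"
    using assms(1) unfolding is_maximal_chain_in_def by blast
  then show ?thesis by blast
qed

text \<open>Induction on the size k: the one-point extension of the chain's k-element member inside the
  next larger member is comparable with the whole chain, so maximality puts it into the chain.\<close>
lemma maximal_chain_card_if_saturated:
  assumes "finite U" "P \<subseteq> Pow U" "{} \<in> P" "U \<in> P"
    and saturated: "\<And>A B. A \<in> P \<Longrightarrow> B \<in> P \<Longrightarrow> A \<subset> B \<Longrightarrow> \<exists>z\<in>B - A. insert z A \<in> P"
    and maximal: "is_maximal_chain_in P C"
  shows "card C = Suc (card U)"
proof -
  have chain: "is_chain_in P C"
    using maximal unfolding is_maximal_chain_in_def by blast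
  then have sub: "X \<subseteq> U" if "X \<in> C" for X
    using that assms(2) unfolding is_chain_in_def by blast
  have fin: "finite X" if "X \<in> C" for X
    using sub[OF that] assms(1) by (rule finite_subset)
  have "finite C"
    using sub assms(1) by (intro finite_subset[of C "Pow U"]) auto
  have "U \<in> C"
    using sub by (intro maximal_chain_insert[OF maximal assms(4)]) blast
  have level: "\<exists>X\<in>C. card X = k" if "k \<le> card U" for k
    using that
  proof (induction k)
    case 0
    have "{} \<in> C" by (intro maximal_chain_insert[OF maximal assms(3)]) blast
    then show ?case using card.empty by blast
  next
    case (Suc k)
    then obtain X where X: "X \<in> C" "card X = k" by auto
    define above where "above = {Y \<in> C. X \<subset> Y}"
    have "U \<in> above"
      using X Suc.prems sub \<open>U \<in> C\<close> unfolding above_def by auto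
    then have "finite above" "above \<noteq> {}"
      using \<open>finite C\<close> unfolding above_def by auto
    define Y where "Y = arg_min_on card above"
    have "Y \<in> above"
      unfolding Y_def using \<open>finite above\<close> \<open>above \<noteq> {}\<close> by (rule arg_min_if_finite(1))
    then have Y: "Y \<in> C" "X \<subset> Y"
      unfolding above_def by auto
    have Y_least: "card Y \<le> card D" if "D \<in> above" for D
      unfolding Y_def using \<open>finite above\<close> \<open>above \<noteq> {}\<close> that by (rule arg_min_least)
    obtain z where z: "z \<in> Y - X" "insert z X \<in> P"
      using saturated[of X Y] X(1) Y chain unfolding is_chain_in_def by blast
    have "D \<subseteq> insert z X \<or> insert z X \<subseteq> D" if "D \<in> C" for D
    proof (cases "card D \<le> card X")
      case True
      then show ?thesis using chain_subset_if_card_le[OF chain that X(1)] fin that by blast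
    next
      case False
      then have "X \<subseteq> D" "X \<noteq> D"
        using chain_subset_if_card_le[OF chain X(1) that fin[OF X(1)]] by auto
      then have "card Y \<le> card D" using Y_least that unfolding above_def by auto
      then have "Y \<subseteq> D" using chain_subset_if_card_le[OF chain Y(1) that] fin Y(1) by blast
      then show ?thesis using z(1) Y(2) by blast
    qed
    then have "insert z X \<in> C" by (intro maximal_chain_insert[OF maximal z(2)]) blast
    moreover have "card (insert z X) = Suc k"
      using X z(1) fin by simp
    ultimately show ?case by blast
  qed
  have levels: "card ` C = {0..card U}"
  proof
    show "card ` C \<subseteq> {0..card U}"
      using sub card_mono[OF assms(1)] by auto
    show "{0..card U} \<subseteq> card ` C"
    proof
      fix k assume "k \<in> {0..card U}"
      then obtain X where "X \<in> C" "card X = k" using level by auto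
      then show "k \<in> card ` C" by blast
    qed
  qed
  have "inj_on card C"
    using inj_on_card_chain[OF chain] fin by blast
  then have "card C = card (card ` C)"
    by (rule card_image[symmetric])
  then show ?thesis
    unfolding levels by simp
qed

lemma graded_poset_if_saturated:
  assumes "finite U" "P \<subseteq> Pow U" "{} \<in> P" "U \<in> P"
    and "\<And>A B. A \<in> P \<Longrightarrow> B \<in> P \<Longrightarrow> A \<subset> B \<Longrightarrow> \<exists>z\<in>B - A. insert z A \<in> P"
  shows "graded_poset P"
  unfolding graded_poset_def
proof (intro conjI allI impI)
  show "\<exists>m\<in>P. \<forall>x\<in>P. m \<subseteq> x" using assms(3) by blast
  show "\<exists>M\<in>P. \<forall>x\<in>P. x \<subseteq> M" using assms(2,4) by blast
  fix C D assume "is_maximal_chain_in P C \<and> is_maximal_chain_in P D"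
  then show "card C = card D" using maximal_chain_card_if_saturated[OF assms] by simp
qed

lemma voronoi_poset_saturated:
  assumes inj: "inj_on p {1..n}"
    and A: "A \<in> voronoi_poset n p" and B: "B \<in> voronoi_poset n p" and "A \<subset> B"
  shows "\<exists>z\<in>B - A. insert z A \<in> voronoi_poset n p"
proof -
  have sub: "A \<subseteq> {1..n}" "B \<subseteq> {1..n}"
    using A B unfolding voronoi_poset_def by blast+
  have "p ` A \<noteq> p ` B"
    using inj_on_image_eq_iff[OF inj sub] \<open>A \<subset> B\<close> by simp
  then have "p ` A \<subset> p ` B"
    using \<open>A \<subset> B\<close> by blast
  moreover have "vcell (p ` {1..n}) (p ` A) \<noteq> {}" "vcell (p ` {1..n}) (p ` B) \<noteq> {}"
    using A B unfolding voronoi_poset_def by blast+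
  ultimately obtain w where w: "w \<in> p ` B - p ` A" "vcell (p ` {1..n}) (insert w (p ` A)) \<noteq> {}"
    using vcell_interpolate[OF finite_imageI[OF finite_atLeastAtMost] _ image_mono[OF sub(2)]]
    by meson
  then obtain z where z: "z \<in> B - A" "w = p z"
    by blast
  have "insert z A \<subseteq> {1..n}"
    using z(1) sub by blast
  moreover have "p ` insert z A = insert w (p ` A)"
    using z(2) by simp
  ultimately have "insert z A \<in> voronoi_poset n p"
    using w(2) unfolding voronoi_poset_def by simp
  with z(1) show ?thesis by blast
qed

theorem mainTheorem2:
  fixes n :: nat and p :: "nat \<Rightarrow> real^2"
  assumes "n \<ge> 3"
    and "inj_on p {1..n}"
    and "general_position (p ` {1..n})"
  shows "graded_poset (voronoi_poset n p)"
proof (rule graded_poset_if_saturated)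
  show "finite {1..n}" by simp
  show "voronoi_poset n p \<subseteq> Pow {1..n}" unfolding voronoi_poset_def by blast
  show "{} \<in> voronoi_poset n p" "{1..n} \<in> voronoi_poset n p"
    unfolding voronoi_poset_def by simp_all
  show "\<exists>z\<in>B - A. insert z A \<in> voronoi_poset n p"
    if "A \<in> voronoi_poset n p" "B \<in> voronoi_poset n p" "A \<subset> B" for A B
    using voronoi_poset_saturated[OF assms(2) that] .
qed

end
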